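(* Fix $n,p$, a bandwidth $k$, a positive integer $|J_A|$, and constants $M>0$, $\kappa>0$, $\nu>0$. Let $p'=(2k+1)\sqrt{(p-k-1)(p-k)}$ and, for positive integers $a$, $$\rho_a=(Mp'/|J_A|)^{1/a}(a!)^{1/(2a)}\kappa^{1/2}\nu n^{-1/2}.$$ Considering $\rho_a$ as a function of the integer order $a$: (i) if $|J_A|\ge Mp'$, the minimum of $\rho_a$ is achieved at $a=1$; (ii) if $|J_A|<Mp'$, the minimum of $\rho_a$ is achieved at some $a$, which increases as $Mp'/|J_A|$ increases.
   Context: In the paper, $\rho_a$ is the common signal strength $\sigma_{j_1j_2}=\rho$ (for $(j_1,j_2)$ in the signal set $J_A$ of size $|J_A|$ outside the band $|j_1-j_2|\le k$) at which the test based on the order-$a$ U-statistic attains asymptotic power $\Phi(-z_{1-\alpha}+M/\sqrt2)$, in the special case where the in-band covariances equal $\nu$ and the moment constant is $\kappa$; $n$ is the sample size and $p$ the dimension. *)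

theory Defs
  imports Complex_Main
begin

definition pprime :: "nat \<Rightarrow> nat \<Rightarrow> real" where
  "pprime k p = (2 * real k + 1) * sqrt ((real p - real k - 1) * (real p - real k))"

definition rho :: "nat \<Rightarrow> nat \<Rightarrow> nat \<Rightarrow> nat \<Rightarrow> real \<Rightarrow> real \<Rightarrow> real \<Rightarrow> nat \<Rightarrow> real" where
  "rho n p k JA M \<kappa> \<nu> a =
     (M * pprime k p / real JA) powr (1 / real a) * (fact a) powr (1 / (2 * real a))
     * \<kappa> powr (1/2) * \<nu> * real n powr (-1/2)"

definition is_min_order :: "nat \<Rightarrow> nat \<Rightarrow> nat \<Rightarrow> nat \<Rightarrow> real \<Rightarrow> real \<Rightarrow> real \<Rightarrow> nat \<Rightarrow> bool" where
  "is_min_order n p k JA M \<kappa> \<nu> a \<longleftrightarrow>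
     a \<ge> 1 \<and> (\<forall>b\<ge>1. rho n p k JA M \<kappa> \<nu> a \<le> rho n p k JA M \<kappa> \<nu> b)"

end

theory Submission
  imports Defs
begin

text \<open>Up to a positive factor, \<open>\<rho>\<^sub>a\<close> is \<open>exp (L/a + ln (a!)/(2a))\<close> with \<open>L = ln (M p'/|J\<^sub>A|)\<close>,
so only this objective matters. If \<open>L \<le> 0\<close>, both summands are minimised at \<open>a = 1\<close>.
In general \<open>ln (a!)/a \<rightarrow> \<infinity>\<close> makes the objective coercive, so a minimiser exists. Increasing \<open>L\<close>
adds the strictly decreasing term \<open>\<Delta>L/a\<close>, which penalises small orders more than large
ones; hence the least minimiser cannot move down.\<close>

definition is_pos_minimiser :: "(nat \<Rightarrow> 'a::linorder) \<Rightarrow> nat \<Rightarrow> bool" where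
  "is_pos_minimiser f a \<longleftrightarrow> a \<ge> 1 \<and> (\<forall>b\<ge>1. f a \<le> f b)"

definition order_objective :: "real \<Rightarrow> nat \<Rightarrow> real" where
  "order_objective L a = L / real a + ln (fact a) / (2 * real a)"

lemma is_pos_minimiser_comp_strict_mono:
  assumes "strict_mono h"
  shows "is_pos_minimiser (h \<circ> f) = is_pos_minimiser f"
  using strict_mono_less_eq[OF assms] by (auto simp: is_pos_minimiser_def fun_eq_iff)

lemma is_pos_minimiser_exists:
  fixes f :: "nat \<Rightarrow> 'a::linorder"
  assumes "eventually (\<lambda>b. f 1 \<le> f b) sequentially"
  shows "\<exists>a. is_pos_minimiser f a"
proof -
  obtain N where N: "\<And>b. b \<ge> N \<Longrightarrow> f 1 \<le> f b"
    using assms by (auto simp: eventually_sequentially)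
  define S where "S = {1..max 1 N}"
  obtain a where "is_arg_min f (\<lambda>x. x \<in> S) a"
    using ex_is_arg_min_if_finite[of S f] by (auto simp: S_def)
  then have a: "a \<in> S" "\<And>b. b \<in> S \<Longrightarrow> f a \<le> f b"
    by (auto simp: is_arg_min_def not_less)
  have "f a \<le> f b" if "b \<ge> 1" for b
  proof (cases "b \<in> S")
    case False
    then have "f 1 \<le> f b" using N that by (auto simp: S_def)
    moreover have "f a \<le> f 1" using a(2) by (simp add: S_def)
    ultimately show ?thesis by order
  qed (use a in auto)
  then show ?thesis using a(1) by (auto simp: is_pos_minimiser_def S_def)
qed

lemma least_pos_minimiser_mono:
  fixes f g :: "nat \<Rightarrow> 'a::linordered_ab_group_add"
  assumes decreasing: "\<And>a b. 1 \<le> a \<Longrightarrow> a < b \<Longrightarrow> g b - f b < g a - f a"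
    and "\<exists>a. is_pos_minimiser f a" "\<exists>a. is_pos_minimiser g a"
  shows "Least (is_pos_minimiser f) \<le> Least (is_pos_minimiser g)"
proof (rule ccontr)
  define a where "a = Least (is_pos_minimiser f)"
  define b where "b = Least (is_pos_minimiser g)"
  have min_f: "is_pos_minimiser f a" and min_g: "is_pos_minimiser g b"
    using LeastI_ex assms(2,3) by (auto simp: a_def b_def)
  assume "\<not> a \<le> b"
  then have "b < a" by simp
  then have "\<not> is_pos_minimiser f b"
    unfolding a_def by (rule not_less_Least)
  then obtain c where "c \<ge> 1" "f c < f b"
    using min_g by (auto simp: is_pos_minimiser_def not_le)
  then have "f a < f b"
    using min_f by (auto simp: is_pos_minimiser_def intro: order.strict_trans1)
  moreover have "g b \<le> g a"
    using min_f min_g by (simp add: is_pos_minimiser_def)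
  ultimately have "f a + g b < f b + g a"
    by (rule add_less_le_mono)
  then have "g b - f b < g a - f a"
    by (simp add: algebra_simps)
  moreover have "g a - f a < g b - f b"
    using decreasing[OF _ \<open>b < a\<close>] min_g by (simp add: is_pos_minimiser_def)
  ultimately show False
    by simp
qed

lemma power_diff_le_fact: "m \<le> n \<Longrightarrow> real m ^ (n - m) \<le> fact n"
proof (induction n rule: dec_induct)
  case (step n)
  have "real m ^ (Suc n - m) = real m * real m ^ (n - m)"
    using step(1) by (simp add: Suc_diff_le)
  also have "\<dots> \<le> real (Suc n) * fact n"
    using step by (intro mult_mono) auto
  finally show ?case by simp
qed simp

lemma filterlim_ln_fact_over_self: "filterlim (\<lambda>n. ln (fact n) / real n) at_top sequentially"
proof (subst filterlim_at_top_gt[where c = 0], intro allI impI)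
  fix Z :: real
  assume "Z > 0"
  define m where "m = nat \<lceil>exp (2 * Z)\<rceil>"
  have exp_le_m: "exp (2 * Z) \<le> real m"
    unfolding m_def by linarith
  moreover have "1 \<le> exp (2 * Z)"
    using \<open>Z > 0\<close> by simp
  ultimately have "m \<ge> 1"
    by linarith
  have "2 * Z \<le> ln (real m)"
    using exp_le_m \<open>m \<ge> 1\<close> by (subst ln_ge_iff) auto
  have "Z \<le> ln (fact n) / real n" if "n \<ge> 2 * m" for n
  proof -
    have "real n * Z \<le> real (n - m) * (2 * Z)"
      using that \<open>Z > 0\<close> by (simp add: of_nat_diff mult_right_mono)
    also have "\<dots> \<le> real (n - m) * ln (real m)"
      using \<open>2 * Z \<le> ln (real m)\<close> by (intro mult_left_mono) auto
    also have "\<dots> = ln (real m ^ (n - m))"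
      using \<open>m \<ge> 1\<close> by (simp add: ln_realpow)
    also have "\<dots> \<le> ln (fact n)"
      using power_diff_le_fact[of m n] that \<open>m \<ge> 1\<close> by simp
    finally show ?thesis
      using that \<open>m \<ge> 1\<close> by (simp add: field_simps)
  qed
  then show "eventually (\<lambda>n. Z \<le> ln (fact n) / real n) sequentially"
    by (auto simp: eventually_sequentially)
qed

lemma order_objective_eventually_ge_1:
  "eventually (\<lambda>b. order_objective L 1 \<le> order_objective L b) sequentially"
proof -
  have "eventually (\<lambda>b. 4 * \<bar>L\<bar> \<le> ln (fact b) / real b \<and> b \<ge> 1) sequentially"
    using filterlim_ln_fact_over_self[unfolded filterlim_at_top]
    by (intro eventually_conj) (auto simp: eventually_ge_at_top)
  then show ?thesis
  proof eventually_elim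
    case (elim b)
    have "\<bar>L\<bar> / real b \<le> \<bar>L\<bar>"
      using elim by (simp add: divide_le_eq mult_le_cancel_left1)
    moreover have "\<bar>L / real b\<bar> = \<bar>L\<bar> / real b"
      by simp
    ultimately have "- \<bar>L\<bar> \<le> L / real b"
      by arith
    moreover have "ln (fact b) / (2 * real b) = (ln (fact b) / real b) / 2"
      by simp
    ultimately have "L \<le> L / real b + ln (fact b) / (2 * real b)"
      using elim abs_ge_self[of L] by linarith
    then show ?case
      by (simp add: order_objective_def)
  qed
qed

lemma is_pos_minimiser_order_objective_1:
  assumes "L \<le> 0"
  shows "is_pos_minimiser (order_objective L) 1"
  unfolding is_pos_minimiser_def
proof (intro conjI allI impI)
  fix b :: nat
  assume "b \<ge> 1"
  then have "L * real b \<le> L * 1"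
    using assms by (intro mult_left_mono_neg) auto
  then have "L \<le> L / real b"
    using \<open>b \<ge> 1\<close> by (simp add: le_divide_eq)
  moreover have "0 \<le> ln (fact b) / (2 * real b)"
    by simp
  ultimately have "L \<le> L / real b + ln (fact b) / (2 * real b)"
    by linarith
  then show "order_objective L 1 \<le> order_objective L b"
    by (simp add: order_objective_def)
qed simp

lemma least_minimiser_order_objective_mono:
  assumes "L < L'"
  shows "Least (is_pos_minimiser (order_objective L)) \<le> Least (is_pos_minimiser (order_objective L'))"
proof (rule least_pos_minimiser_mono)
  fix a b :: nat
  assume "1 \<le> a" "a < b"
  then show "order_objective L' b - order_objective L b < order_objective L' a - order_objective L a"
    using assms by (simp add: order_objective_def diff_divide_distrib[symmetric] divide_strict_left_mono)
qed (intro is_pos_minimiser_exists order_objective_eventually_ge_1)+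

lemma rho_eq_exp_order_objective:
  assumes "M * pprime k p / real JA > 0"
  shows "rho n p k JA M \<kappa> \<nu> a
    = exp (order_objective (ln (M * pprime k p / real JA)) a) * (\<kappa> powr (1/2) * \<nu> * real n powr (-1/2))"
proof -
  let ?x = "M * pprime k p / real JA"
  have "x powr (1 / real a) * fact a powr (1 / (2 * real a)) = exp (order_objective (ln x) a)"
    if "x > 0" for x :: real
    using that by (simp add: order_objective_def powr_def exp_add)
  moreover have "rho n p k JA M \<kappa> \<nu> a
      = ?x powr (1 / real a) * fact a powr (1 / (2 * real a)) * (\<kappa> powr (1/2) * \<nu> * real n powr (-1/2))"
    by (simp add: rho_def mult.assoc)
  ultimately show ?thesis
    using assms by simp
qed

lemma is_min_order_iff:
  assumes "M * pprime k p / real JA > 0" "n \<ge> 1" "\<kappa> > 0" "\<nu> > 0"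
  shows "is_min_order n p k JA M \<kappa> \<nu> = is_pos_minimiser (order_objective (ln (M * pprime k p / real JA)))"
proof -
  define C where "C = \<kappa> powr (1/2) * \<nu> * real n powr (-1/2)"
  have "C > 0"
    using assms by (simp add: C_def)
  then have "strict_mono (\<lambda>t. exp t * C)"
    by (intro strict_monoI) simp
  then have "is_pos_minimiser ((\<lambda>t. exp t * C) \<circ> order_objective (ln (M * pprime k p / real JA)))
      = is_pos_minimiser (order_objective (ln (M * pprime k p / real JA)))"
    by (rule is_pos_minimiser_comp_strict_mono)
  moreover have "is_min_order n p k JA M \<kappa> \<nu> = is_pos_minimiser (rho n p k JA M \<kappa> \<nu>)"
    by (simp add: fun_eq_iff is_min_order_def is_pos_minimiser_def)
  moreover have "rho n p k JA M \<kappa> \<nu> = (\<lambda>t. exp t * C) \<circ> order_objective (ln (M * pprime k p / real JA))"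
    using rho_eq_exp_order_objective[OF assms(1)] by (simp add: fun_eq_iff C_def)
  ultimately show ?thesis
    by simp
qed

text \<open>If \<open>p' = 0\<close> then \<open>\<rho>\<close> vanishes identically, because \<open>0 powr r = 0\<close> for every exponent \<open>r\<close>.\<close>

lemma is_min_order_1:
  assumes "0 \<le> M * pprime k p / real JA" "M * pprime k p / real JA \<le> 1"
    and "n \<ge> 1" "\<kappa> > 0" "\<nu> > 0"
  shows "is_min_order n p k JA M \<kappa> \<nu> 1"
proof (cases "M * pprime k p / real JA = 0")
  case True
  then show ?thesis
    by (auto simp: is_min_order_def rho_def)
next
  case False
  then have "M * pprime k p / real JA > 0"
    using assms(1) by linarith
  moreover have "ln (M * pprime k p / real JA) \<le> 0"
    using calculation assms(2) by simp
  ultimately show ?thesis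
    using is_min_order_iff assms(3-5) is_pos_minimiser_order_objective_1 by simp
qed

lemma is_min_order_exists:
  assumes "M * pprime k p / real JA > 0" "n \<ge> 1" "\<kappa> > 0" "\<nu> > 0"
  shows "\<exists>a. is_min_order n p k JA M \<kappa> \<nu> a"
  using is_min_order_iff[OF assms] is_pos_minimiser_exists[OF order_objective_eventually_ge_1] by simp

lemma least_min_order_mono:
  assumes "0 < M * pprime k p / real JA" "M * pprime k p / real JA < M' * pprime k' p' / real JA'"
    and "n \<ge> 1" "\<kappa> > 0" "\<nu> > 0"
  shows "(LEAST a. is_min_order n p k JA M \<kappa> \<nu> a) \<le> (LEAST a. is_min_order n p' k' JA' M' \<kappa> \<nu> a)"
proof -
  have "M' * pprime k' p' / real JA' > 0" "ln (M * pprime k p / real JA) < ln (M' * pprime k' p' / real JA')"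
    using assms(1,2) by auto
  then show ?thesis
    using is_min_order_iff[OF assms(1,3-5)] is_min_order_iff[OF _ assms(3-5)]
      least_minimiser_order_objective_mono by simp
qed

lemma pprime_nonneg: "k < p \<Longrightarrow> pprime k p \<ge> 0"
  unfolding pprime_def by (intro mult_nonneg_nonneg) auto

theorem proposition1:
  fixes n p k JA :: nat and M \<kappa> \<nu> :: real
  assumes "n \<ge> 1" and "k < p" and "JA \<ge> 1"
    and "M > 0" and "\<kappa> > 0" and "\<nu> > 0"
  shows "(real JA \<ge> M * pprime k p \<longrightarrow> is_min_order n p k JA M \<kappa> \<nu> 1)
       \<and> (real JA < M * pprime k p \<longrightarrow>
            (\<exists>a. is_min_order n p k JA M \<kappa> \<nu> a)
          \<and> (\<forall>p2 k2 JA2 M2. k2 < p2 \<and> JA2 \<ge> 1 \<and> M2 > 0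
               \<and> M * pprime k p / real JA < M2 * pprime k2 p2 / real JA2
               \<longrightarrow> (LEAST a. is_min_order n p k JA M \<kappa> \<nu> a)
                   \<le> (LEAST a. is_min_order n p2 k2 JA2 M2 \<kappa> \<nu> a)))"
proof (intro conjI impI allI)
  assume "real JA \<ge> M * pprime k p"
  moreover have "0 \<le> M * pprime k p / real JA"
    using pprime_nonneg[OF assms(2)] assms(4) by simp
  ultimately show "is_min_order n p k JA M \<kappa> \<nu> 1"
    using is_min_order_1 assms by simp
next
  assume "real JA < M * pprime k p"
  then show "\<exists>a. is_min_order n p k JA M \<kappa> \<nu> a"
    using is_min_order_exists assms by simp
next
  fix p2 k2 JA2 M2
  assume "real JA < M * pprime k p"
    and "k2 < p2 \<and> JA2 \<ge> 1 \<and> M2 > 0 \<and> M * pprime k p / real JA < M2 * pprime k2 p2 / real JA2"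
  then show "(LEAST a. is_min_order n p k JA M \<kappa> \<nu> a) \<le> (LEAST a. is_min_order n p2 k2 JA2 M2 \<kappa> \<nu> a)"
    using least_min_order_mono assms by simp
qed

end
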